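(* Let $F$ be a euclidean field and $B=F[\![X]\!]$. Every quadratic module $Q$ in $B$ is of exactly one of the following forms: (a) $Q=\Phi(F^2,0)$; (b) $Q=B$; (c) $Q=\Phi(F^2,0)\cup\Phi(\epsilon F^2,n)$ for some positive odd integer $n$ and $\epsilon\in\{1,-1\}$; (d) $Q=\Phi(F^2,0)\cup\Phi(F,n)\cup\Phi(F,n+1)$ for some positive integer $n$; (e) $Q=\Phi(F^2,0)\cup\Phi(\epsilon F^2,m)\cup\Phi(F,n)\cup\Phi(F,n+1)$ for some $\epsilon\in\{1,-1\}$, positive odd integer $m$ and positive integer $n$ with $m<n$. In particular, every quadratic module in $F[\![X]\!]$ is a preordering.
   Context: A euclidean field is a formally real field $F$ with $F=F^2\cup(-F^2)$, where $F^2=\{c^2:c\in F\}$; for $\epsilon\in\{\pm1\}$, $\epsilon F^2=\{\epsilon c^2: c\in F\}$. Let $B=F[\![X]\!]$, and for nonzero $f=\sum_{i\ge n}a_iX^i\in B$ with $a_n\ne0$ let $\mathrm{val}(f)=n$ and $\mathrm{an}(f)=a_n$. For a subset $M\subseteq F$ and an integer $n\ge0$, $$\Phi(M,n)=\{x\in B\setminus\{0\}:\ \mathrm{val}(x)\equiv n \pmod 2,\ \mathrm{val}(x)\ge n,\ \mathrm{an}(x)\in M\}\cup\{0\}.$$ A quadratic module in a commutative ring $R$ is a subset $Q$ with $Q+Q\subseteq Q$, $a^2Q\subseteq Q$ for all $a\in R$, and $1\in Q$; a preordering is a quadratic module closed under multiplication. *)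

theory Defs
  imports "HOL-Computational_Algebra.Formal_Power_Series"
begin

definition formally_real_field :: "'a::field itself \<Rightarrow> bool" where
  "formally_real_field _ \<longleftrightarrow>
     \<not> (\<exists>xs :: 'a list. sum_list (map (\<lambda>x. x * x) xs) = -1)"

definition euclidean_field :: "'a::field itself \<Rightarrow> bool" where
  "euclidean_field T \<longleftrightarrow> formally_real_field T \<and>
     (\<forall>x :: 'a. \<exists>c. x = c * c \<or> x = - (c * c))"

definition sq_set :: "'a::field \<Rightarrow> 'a set" where
  "sq_set eps = {eps * (c * c) | c. True}"

text \<open>val(f) = subdegree f, an(f) = coefficient at subdegree f.\<close>
definition Phi :: "'a::field set \<Rightarrow> nat \<Rightarrow> 'a fps set" where
  "Phi M n = {x. x \<noteq> 0 \<and> subdegree x mod 2 = n mod 2 \<and> subdegree x \<ge> n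
                  \<and> fps_nth x (subdegree x) \<in> M} \<union> {0}"

definition quadratic_module :: "'r::comm_ring_1 set \<Rightarrow> bool" where
  "quadratic_module Q \<longleftrightarrow> (\<forall>x\<in>Q. \<forall>y\<in>Q. x + y \<in> Q) \<and>
     (\<forall>a. \<forall>q\<in>Q. a\<^sup>2 * q \<in> Q) \<and> 1 \<in> Q"

definition preordering :: "'r::comm_ring_1 set \<Rightarrow> bool" where
  "preordering Q \<longleftrightarrow> quadratic_module Q \<and> (\<forall>x\<in>Q. \<forall>y\<in>Q. x * y \<in> Q)"

end

theory Submission
  imports Defs
begin

text \<open>
  Since 2 is invertible, a unit of F[[X]] whose constant term is a square is itself a square,
  so whether a nonzero f lies in a quadratic module Q depends only on the order of f and the
  square class of its leading coefficient; multiplying by X^2 moves these data up by two orders.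
  As F* = F^2 \<union> -F^2, each order carries either at most one square class of leading coefficients
  or all of F* ("full"), and full orders are closed upwards because
  b X^(d+1) = X^d + (-X^d + b X^(d+1)).  So Q is fixed by the least full order n and by the
  least odd non-full order m that occurs, together with its sign \<epsilon>.  The resulting membership
  criterion is multiplicative, and n, m, \<epsilon> can be read off from the set, so exactly one of
  the five forms applies.
\<close>

unbundle fps_syntax

section \<open>Square roots in power series rings\<close>

text \<open>The coefficients of a square root of \<open>a\<close> with constant term \<open>c\<close>, obtained by solving
  \<open>(s * s) $ n = a $ n\<close> for \<open>s $ n\<close>.\<close>

fun fps_sqrt_coeff :: "'a::field fps \<Rightarrow> 'a \<Rightarrow> nat \<Rightarrow> 'a" where
  "fps_sqrt_coeff a c 0 = c"
| "fps_sqrt_coeff a c (Suc n) =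
     (a $ Suc n - (\<Sum>i=1..n. fps_sqrt_coeff a c i * fps_sqrt_coeff a c (Suc n - i))) / (2 * c)"

lemma fps_sqrt_coeff_square:
  fixes a :: "'a::field fps"
  assumes "a $ 0 = c * c" and "2 * c \<noteq> 0"
  shows "Abs_fps (fps_sqrt_coeff a c) * Abs_fps (fps_sqrt_coeff a c) = a"
proof (rule fps_ext)
  fix n
  define s where "s = fps_sqrt_coeff a c"
  show "(Abs_fps s * Abs_fps s) $ n = a $ n"
  proof (cases n)
    case 0
    then show ?thesis using assms(1) by (simp add: s_def fps_mult_nth)
  next
    case (Suc m)
    have "(Abs_fps s * Abs_fps s) $ Suc m = s 0 * s (Suc m) + (\<Sum>i=1..Suc m. s i * s (Suc m - i))"
      by (simp add: fps_mult_nth sum.atLeast_Suc_atMost)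
    also have "\<dots> = 2 * c * s (Suc m) + (\<Sum>i=1..m. s i * s (Suc m - i))"
      by (simp add: s_def algebra_simps)
    also have "\<dots> = a $ Suc m"
      using assms(2) by (simp add: s_def)
    finally show ?thesis using Suc by simp
  qed
qed

lemma fps_eq_square_mult:
  fixes x y :: "'a::field fps"
  assumes "(2::'a) \<noteq> 0" and "x \<noteq> 0" and "y \<noteq> 0" and "c \<noteq> 0"
    and "subdegree y = subdegree x + 2 * k"
    and "y $ subdegree y = x $ subdegree x * (c * c)"
  obtains s where "y = s\<^sup>2 * x"
proof -
  define u where "u = fps_shift (subdegree y) y"
  define v where "v = fps_shift (subdegree x) x"
  have v0: "v $ 0 \<noteq> 0" using assms(2) by (simp add: v_def)
  define w where "w = u * inverse v"
  have "w $ 0 = c * c"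
    using v0 assms(6) by (simp add: w_def u_def v_def field_simps)
  then have w: "w = Abs_fps (fps_sqrt_coeff w c) ^ 2"
    using fps_sqrt_coeff_square[of w c] assms(1,4) by (simp add: power2_eq_square)
  have "y = u * fps_X ^ subdegree y" "x = v * fps_X ^ subdegree x"
    by (simp_all add: u_def v_def subdegree_decompose[symmetric])
  moreover have "u = w * v"
    using inverse_mult_eq_1[OF v0] by (simp add: w_def mult.assoc)
  ultimately have "y = (Abs_fps (fps_sqrt_coeff w c) * fps_X ^ k)\<^sup>2 * x"
    using assms(5) w by (simp add: power_add power_mult_distrib power_mult[symmetric] algebra_simps)
  then show ?thesis by (rule that)
qed

section \<open>Formally real and euclidean fields\<close>

lemma sq_set_iff: "b \<in> sq_set eps \<longleftrightarrow> (\<exists>c. b = eps * (c * c))"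
  by (auto simp: sq_set_def)

lemma sq_set_mult: "a \<in> sq_set e \<Longrightarrow> b \<in> sq_set e' \<Longrightarrow> a * b \<in> sq_set (e * e')"
  unfolding sq_set_iff by (metis (no_types) mult.assoc mult.left_commute)

lemma formally_real_field_square_neq_neg_one:
  assumes "formally_real_field TYPE('a::field)"
  shows "c * c \<noteq> (-1::'a)"
proof
  assume "c * c = -1"
  then have "sum_list (map (\<lambda>x. x * x) [c]) = -1" by simp
  with assms show False unfolding formally_real_field_def by blast
qed

lemma formally_real_field_two_neq_zero:
  assumes "formally_real_field TYPE('a::field)"
  shows "(2::'a) \<noteq> 0"
  using formally_real_field_square_neq_neg_one[OF assms, of 1]
  by (metis add_eq_0_iff mult_1 one_add_one)

lemma formally_real_field_neg_notin_sq_set: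
  assumes "formally_real_field TYPE('a::field)" and "eps \<noteq> 0"
  shows "- eps \<notin> sq_set (eps::'a)"
proof
  assume "- eps \<in> sq_set eps"
  then obtain c where "- eps = eps * (c * c)" by (auto simp: sq_set_iff)
  then have "c * c = -1" using assms(2)
    by (metis mult_cancel_left mult_minus1_right)
  with formally_real_field_square_neq_neg_one[OF assms(1)] show False by blast
qed

lemma formally_real_field_sign_in_sq_set_iff:
  assumes "formally_real_field TYPE('a::field)" and "eps \<in> {1, -1}" and "eps' \<in> {1, -1::'a}"
  shows "eps \<in> sq_set eps' \<longleftrightarrow> eps = eps'"
proof
  assume "eps \<in> sq_set eps'"
  moreover have "- eps' \<notin> sq_set eps'"
    using assms(3) by (intro formally_real_field_neg_notin_sq_set[OF assms(1)]) auto
  moreover have "eps = eps' \<or> eps = - eps'" using assms(2,3) by auto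
  ultimately show "eps = eps'" by metis
next
  assume "eps = eps'"
  then show "eps \<in> sq_set eps'" by (auto simp: sq_set_iff intro: exI[of _ 1])
qed

lemma euclidean_field_formally_real:
  "euclidean_field (T :: 'a::field itself) \<Longrightarrow> formally_real_field T"
  by (simp add: euclidean_field_def)

lemma euclidean_field_square_cases:
  fixes x :: "'a::field"
  assumes "euclidean_field TYPE('a)"
  obtains c where "x = c * c \<or> x = - (c * c)"
  using assms by (auto simp: euclidean_field_def)

section \<open>The normal forms\<close>

lemma Phi_mem_iff:
  "y \<noteq> 0 \<Longrightarrow> y \<in> Phi M n \<longleftrightarrow>
     subdegree y mod 2 = n mod 2 \<and> n \<le> subdegree y \<and> y $ subdegree y \<in> M"
  by (auto simp: Phi_def)

lemma le_iff_parity_split: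
  "(n::nat) \<le> d \<longleftrightarrow> d mod 2 = n mod 2 \<and> n \<le> d \<or> d mod 2 = Suc n mod 2 \<and> Suc n \<le> d"
  by (cases "n = d") (auto simp: mod2_eq_if split: if_splits)

lemma zero_in_Phi: "0 \<in> Phi M n"
  by (simp add: Phi_def)

lemma nth_const_mult_X_power: "(fps_const b * fps_X ^ n) $ m = (if m = n then b else (0::'a::field))"
  by simp

lemma subdegree_const_mult_X_power: "b \<noteq> 0 \<Longrightarrow> subdegree (fps_const b * fps_X ^ n) = n"
  by (rule subdegreeI) auto

lemma const_mult_X_power_neq_zero: "b \<noteq> 0 \<Longrightarrow> fps_const b * fps_X ^ n \<noteq> (0::'a::field fps)"
  by (metis fps_nonzero_nth nth_const_mult_X_power)

text \<open>
  Each of the five forms is an instance; \<open>\<Phi>(F, n) \<union> \<Phi>(F, n + 1)\<close> consists of the elements of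
  order at least \<open>n\<close>.
\<close>

definition qm_family :: "nat option \<Rightarrow> ('a::field \<times> nat) option \<Rightarrow> 'a fps set" where
  "qm_family N M = Phi (sq_set 1) 0
     \<union> (case M of None \<Rightarrow> {} | Some (eps, m) \<Rightarrow> Phi (sq_set eps) m)
     \<union> (case N of None \<Rightarrow> {} | Some n \<Rightarrow> Phi UNIV n \<union> Phi UNIV (n + 1))"

definition qm_params :: "nat option \<Rightarrow> ('a::field \<times> nat) option \<Rightarrow> bool" where
  "qm_params N M \<longleftrightarrow>
     (\<forall>eps m. M = Some (eps, m) \<longrightarrow> eps \<in> {1, -1} \<and> odd m \<and> (\<forall>n. N = Some n \<longrightarrow> m < n))"

definition qm_family_leading :: "nat option \<Rightarrow> ('a::field \<times> nat) option \<Rightarrow> nat \<Rightarrow> 'a \<Rightarrow> bool" where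
  "qm_family_leading N M d b \<longleftrightarrow>
     (even d \<and> b \<in> sq_set 1)
     \<or> (\<exists>eps m. M = Some (eps, m) \<and> odd d \<and> m \<le> d \<and> b \<in> sq_set eps)
     \<or> (\<exists>n. N = Some n \<and> n \<le> d)"

lemma zero_in_qm_family: "0 \<in> qm_family N M"
  by (simp add: qm_family_def zero_in_Phi)

lemma qm_family_mem_iff:
  assumes "qm_params N M" and "y \<noteq> 0"
  shows "y \<in> qm_family N M \<longleftrightarrow> qm_family_leading N M (subdegree y) (y $ subdegree y)"
proof -
  let ?d = "subdegree y" and ?b = "y $ subdegree y"
  have sos: "y \<in> Phi (sq_set 1) 0 \<longleftrightarrow> even ?d \<and> ?b \<in> sq_set 1"
    using assms(2) by (auto simp: Phi_mem_iff)
  have odd: "y \<in> Phi (sq_set eps) m \<longleftrightarrow> odd ?d \<and> m \<le> ?d \<and> ?b \<in> sq_set eps"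
    if "M = Some (eps, m)" for eps m
  proof -
    have "odd m" using assms(1) that by (simp add: qm_params_def)
    then show ?thesis using assms(2) by (auto simp: Phi_mem_iff odd_iff_mod_2_eq_one)
  qed
  have large: "y \<in> Phi UNIV n \<or> y \<in> Phi UNIV (Suc n) \<longleftrightarrow> n \<le> ?d" for n
    using le_iff_parity_split[of n ?d] assms(2) by (simp add: Phi_mem_iff)
  show ?thesis
  proof (cases M)
    case None
    then show ?thesis
      by (cases N) (simp_all add: qm_family_def qm_family_leading_def sos large)
  next
    case (Some p)
    then obtain eps m where "M = Some (eps, m)" by (cases p) auto
    then show ?thesis
      by (cases N) (simp_all add: qm_family_def qm_family_leading_def sos odd large)
  qed
qed

lemma qm_family_leading_mult:
  assumes params: "qm_params N M"
    and "qm_family_leading N M d a" and "qm_family_leading N M e b"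
  shows "qm_family_leading N M (d + e) (a * b)"
proof -
  have square: "eps * eps = 1" if "M = Some (eps, m)" for eps m
    using params that by (auto simp: qm_params_def)
  have sq1: "x * y \<in> sq_set 1" if "x \<in> sq_set eps" "y \<in> sq_set eps" "eps * eps = 1" for x y eps
    using sq_set_mult[OF that(1,2)] that(3) by simp
  have sq: "x * y \<in> sq_set eps" "y * x \<in> sq_set eps" if "x \<in> sq_set 1" "y \<in> sq_set eps" for x y eps
    using sq_set_mult[OF that] by (simp_all add: mult.commute)
  from assms(2,3) show ?thesis
    unfolding qm_family_leading_def
    by (elim disjE exE conjE) (fastforce intro: sq1 sq square)+
qed

lemma qm_family_mult_closed:
  assumes "qm_params N M" and "x \<in> qm_family N M" and "y \<in> qm_family N M"
  shows "x * y \<in> qm_family N M"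
proof (cases "x = 0 \<or> y = 0")
  case True
  then show ?thesis by (auto simp: zero_in_qm_family)
next
  case False
  then show ?thesis
    using assms qm_family_leading_mult[OF assms(1)] by (simp add: qm_family_mem_iff)
qed

lemma qm_family_leading_all_iff:
  fixes M :: "('a::field \<times> nat) option"
  assumes real: "formally_real_field TYPE('a)" and params: "qm_params N M"
  shows "(\<forall>b. b \<noteq> 0 \<longrightarrow> qm_family_leading N M d b) \<longleftrightarrow> (\<exists>n. N = Some n \<and> n \<le> d)"
proof
  assume all: "\<forall>b. b \<noteq> 0 \<longrightarrow> qm_family_leading N M d b"
  obtain b :: 'a where "b \<noteq> 0" and "\<not> (even d \<and> b \<in> sq_set 1)"
    and "\<not> (\<exists>eps m. M = Some (eps, m) \<and> odd d \<and> m \<le> d \<and> b \<in> sq_set eps)"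
  proof (cases "even d")
    case True
    then show ?thesis
      using that[of "-1"] formally_real_field_neg_notin_sq_set[OF real, of 1] by simp
  next
    case False
    show ?thesis
    proof (cases M)
      case None
      then show ?thesis using that[of 1] False by simp
    next
      case (Some p)
      then obtain eps m where M: "M = Some (eps, m)" by (cases p) auto
      then have "eps \<noteq> 0" using params by (auto simp: qm_params_def)
      then show ?thesis
        using that[of "- eps"] M False formally_real_field_neg_notin_sq_set[OF real] by simp
    qed
  qed
  then show "\<exists>n. N = Some n \<and> n \<le> d"
    using all unfolding qm_family_leading_def by blast
qed (auto simp: qm_family_leading_def)

lemma nat_option_threshold_eq:
  assumes "\<forall>d::nat. (\<exists>n. N = Some n \<and> n \<le> d) \<longleftrightarrow> (\<exists>n. N' = Some n \<and> n \<le> d)"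
  shows "N = N'"
  using assms[rule_format, of "the N"] assms[rule_format, of "the N'"]
  by (cases N; cases N') auto

lemma qm_family_leading_odd_param_bound:
  assumes params: "qm_params N M" and M: "M = Some (eps, m)"
    and same: "qm_family_leading N M m eps \<longleftrightarrow> qm_family_leading N M' m eps"
  shows "\<exists>eps' m'. M' = Some (eps', m') \<and> m' \<le> m \<and> eps \<in> sq_set eps'"
proof -
  have "odd m" and "\<forall>n. N = Some n \<longrightarrow> m < n" and "eps \<in> sq_set eps"
    using params M by (auto simp: qm_params_def sq_set_iff intro: exI[of _ 1])
  then have "qm_family_leading N M m eps"
    using M by (auto simp: qm_family_leading_def)
  with same show ?thesis
    using \<open>odd m\<close> \<open>\<forall>n. N = Some n \<longrightarrow> m < n\<close> by (auto simp: qm_family_leading_def)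
qed

lemma qm_family_leading_eq_imp_eq:
  fixes M M' :: "('a::field \<times> nat) option"
  assumes real: "formally_real_field TYPE('a)"
    and params: "qm_params N M" and params': "qm_params N M'"
    and same: "\<And>d b. b \<noteq> 0 \<Longrightarrow> qm_family_leading N M d b \<longleftrightarrow> qm_family_leading N M' d b"
  shows "M = M'"
proof -
  have sign_nonzero: "eps \<noteq> 0" if "qm_params N M''" "M'' = Some (eps, m)" for M'' eps m
    using that by (auto simp: qm_params_def)
  have M_to_M': "\<exists>eps' m'. M' = Some (eps', m') \<and> m' \<le> m \<and> eps \<in> sq_set eps'"
    if "M = Some (eps, m)" for eps m
    using qm_family_leading_odd_param_bound[OF params that] same[OF sign_nonzero[OF params that]] .
  have M'_to_M: "\<exists>eps m. M = Some (eps, m) \<and> m \<le> m' \<and> eps' \<in> sq_set eps"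
    if "M' = Some (eps', m')" for eps' m'
    using qm_family_leading_odd_param_bound[OF params' that] same[OF sign_nonzero[OF params' that]]
    by blast
  show "M = M'"
  proof (cases "M = None \<or> M' = None")
    case True
    moreover have "M = None \<longleftrightarrow> M' = None"
      using M_to_M' M'_to_M by (metis option.distinct(1) option.exhaust surj_pair)
    ultimately show ?thesis by auto
  next
    case False
    then obtain eps m eps' m' where M: "M = Some (eps, m)" and M': "M' = Some (eps', m')"
      by (metis option.exhaust surj_pair)
    then have "m' \<le> m" "eps \<in> sq_set eps'" "m \<le> m'"
      using M_to_M'[OF M] M'_to_M[OF M'] by auto
    moreover have "eps \<in> {1, -1}" "eps' \<in> {1, -1}"
      using params params' M M' by (auto simp: qm_params_def)
    ultimately show ?thesis
      using M M' formally_real_field_sign_in_sq_set_iff[OF real] by auto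
  qed
qed

lemma qm_family_eq_iff:
  fixes M M' :: "('a::field \<times> nat) option"
  assumes real: "formally_real_field TYPE('a)"
    and params: "qm_params N M" and params': "qm_params N' M'"
  shows "qm_family N M = qm_family N' M' \<longleftrightarrow> N = N' \<and> M = M'"
proof
  assume eq: "qm_family N M = qm_family N' M'"
  have same: "qm_family_leading N M d b \<longleftrightarrow> qm_family_leading N' M' d b" if "b \<noteq> 0" for d b
    using eq qm_family_mem_iff[OF params, of "fps_const b * fps_X ^ d"]
      qm_family_mem_iff[OF params', of "fps_const b * fps_X ^ d"]
    by (simp add: that const_mult_X_power_neq_zero subdegree_const_mult_X_power)
  have "(\<exists>n. N = Some n \<and> n \<le> d) \<longleftrightarrow> (\<exists>n. N' = Some n \<and> n \<le> d)" for d
    unfolding qm_family_leading_all_iff[OF real params, symmetric]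
      qm_family_leading_all_iff[OF real params', symmetric]
    by (simp add: same)
  then have N: "N = N'"
    using nat_option_threshold_eq by blast
  with params' same have "M = M'"
    by (intro qm_family_leading_eq_imp_eq[OF real params]) simp_all
  with N show "N = N' \<and> M = M'" ..
qed simp

lemma qm_family_Some_0: "qm_family (Some 0) (None :: ('a::field \<times> nat) option) = UNIV"
proof -
  have "y \<in> Phi UNIV 0 \<union> Phi UNIV 1" for y :: "'a fps"
    using mod2_eq_if[of "subdegree y"] by (auto simp: Phi_def split: if_splits)
  then show ?thesis by (auto simp: qm_family_def)
qed

lemma qm_family_instances:
  "qm_family None None = Phi (sq_set 1) 0"
  "qm_family None (Some (eps, m)) = Phi (sq_set 1) 0 \<union> Phi (sq_set eps) m"
  "qm_family (Some n) None = Phi (sq_set 1) 0 \<union> Phi UNIV n \<union> Phi UNIV (n + 1)"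
  "qm_family (Some n) (Some (eps, m))
     = Phi (sq_set 1) 0 \<union> Phi (sq_set eps) m \<union> Phi UNIV n \<union> Phi UNIV (n + 1)"
  by (simp_all add: qm_family_def Un_assoc)

lemma qm_family_forms_count:
  fixes M :: "('a::field \<times> nat) option"
  assumes real: "formally_real_field TYPE('a)" and params: "qm_params N M"
    and Q: "Q = qm_family N M"
  shows "length (filter id
           [ Q = Phi (sq_set 1) 0,
             Q = UNIV,
             (\<exists>n eps. odd n \<and> eps \<in> {1, -1} \<and>
                Q = Phi (sq_set 1) 0 \<union> Phi (sq_set eps) n),
             (\<exists>n. n > 0 \<and>
                Q = Phi (sq_set 1) 0 \<union> Phi UNIV n \<union> Phi UNIV (n + 1)),
             (\<exists>eps m n. eps \<in> {1, -1} \<and> odd m \<and> n > 0 \<and> m < n \<and>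
                Q = Phi (sq_set 1) 0 \<union> Phi (sq_set eps) m \<union> Phi UNIV n \<union> Phi UNIV (n + 1))
           ]) = 1"
proof -
  have eq: "Q = qm_family N' M' \<longleftrightarrow> N = N' \<and> M = M'" if "qm_params N' M'" for N' M'
    using qm_family_eq_iff[OF real params that] Q by simp
  have A: "Q = qm_family None None \<longleftrightarrow> N = None \<and> M = None"
    by (rule eq) (simp add: qm_params_def)
  have B: "Q = qm_family (Some 0) None \<longleftrightarrow> N = Some 0 \<and> M = None"
    by (rule eq) (simp add: qm_params_def)
  have C: "(\<exists>m eps. odd m \<and> eps \<in> {1, -1} \<and> Q = qm_family None (Some (eps, m)))
      \<longleftrightarrow> N = None \<and> M \<noteq> None"
  proof
    assume "\<exists>m eps. odd m \<and> eps \<in> {1, -1} \<and> Q = qm_family None (Some (eps, m))"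
    then obtain m eps where "odd m" "eps \<in> {1, -1}" "Q = qm_family None (Some (eps, m))"
      by blast
    then show "N = None \<and> M \<noteq> None" using eq[of None "Some (eps, m)"] by (simp add: qm_params_def)
  next
    assume "N = None \<and> M \<noteq> None"
    then obtain eps m where "N = None" "M = Some (eps, m)" by auto
    then show "\<exists>m eps. odd m \<and> eps \<in> {1, -1} \<and> Q = qm_family None (Some (eps, m))"
      using params Q by (auto simp: qm_params_def)
  qed
  have D: "(\<exists>n. 0 < n \<and> Q = qm_family (Some n) None) \<longleftrightarrow> (\<exists>n>0. N = Some n) \<and> M = None"
    by (auto simp: eq qm_params_def)
  have E: "(\<exists>eps m n. eps \<in> {1, -1} \<and> odd m \<and> 0 < n \<and> m < n \<and> Q = qm_family (Some n) (Some (eps, m)))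
      \<longleftrightarrow> (\<exists>n>0. N = Some n) \<and> M \<noteq> None"
  proof
    assume "\<exists>eps m n. eps \<in> {1, -1} \<and> odd m \<and> 0 < n \<and> m < n \<and> Q = qm_family (Some n) (Some (eps, m))"
    then obtain eps m n where "eps \<in> {1, -1}" "odd m" "0 < n" "m < n"
      and "Q = qm_family (Some n) (Some (eps, m))"
      by blast
    then show "(\<exists>n>0. N = Some n) \<and> M \<noteq> None"
      using eq[of "Some n" "Some (eps, m)"] by (auto simp: qm_params_def)
  next
    assume "(\<exists>n>0. N = Some n) \<and> M \<noteq> None"
    then obtain n eps m where "N = Some n" "0 < n" "M = Some (eps, m)" by auto
    with params Q show "\<exists>eps m n. eps \<in> {1, -1} \<and> odd m \<and> 0 < n \<and> m < n \<and> Q = qm_family (Some n) (Some (eps, m))"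
      by (intro exI[of _ eps] exI[of _ m] exI[of _ n]) (auto simp: qm_params_def)
  qed
  show ?thesis
    \<comment> \<open>one at a time, largest first: form (c) is a subterm of form (e)\<close>
    unfolding qm_family_instances(4)[symmetric] unfolding qm_family_instances(3)[symmetric]
    unfolding qm_family_instances(2)[symmetric] unfolding qm_family_instances(1)[symmetric]
    unfolding qm_family_Some_0[symmetric] A B C D E
    using params by (cases N; cases M) (auto simp: qm_params_def)
qed

section \<open>Quadratic modules in \<open>F[[X]]\<close> over a euclidean field\<close>

definition has_leading :: "'a::field fps set \<Rightarrow> nat \<Rightarrow> 'a \<Rightarrow> bool" where
  "has_leading Q d a \<longleftrightarrow> (\<exists>x\<in>Q. x \<noteq> 0 \<and> subdegree x = d \<and> x $ d = a)"

definition full_degree :: "'a::field fps set \<Rightarrow> nat \<Rightarrow> bool" where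
  "full_degree Q d \<longleftrightarrow> (\<forall>a. a \<noteq> 0 \<longrightarrow> has_leading Q d a)"

definition odd_partial_degree :: "'a::field fps set \<Rightarrow> nat \<Rightarrow> bool" where
  "odd_partial_degree Q d \<longleftrightarrow> odd d \<and> (\<exists>a. has_leading Q d a) \<and> \<not> full_degree Q d"

locale euclidean_quadratic_module =
  fixes Q :: "'a::field fps set"
  assumes euclidean: "euclidean_field TYPE('a)"
    and quadratic_module: "quadratic_module Q"
begin

lemma one_mem: "1 \<in> Q"
  using quadratic_module by (simp add: quadratic_module_def)

lemma add_mem: "x \<in> Q \<Longrightarrow> y \<in> Q \<Longrightarrow> x + y \<in> Q"
  using quadratic_module by (simp add: quadratic_module_def)

lemma square_mult_mem: "x \<in> Q \<Longrightarrow> s\<^sup>2 * x \<in> Q"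
  using quadratic_module by (simp add: quadratic_module_def)

lemma zero_mem: "0 \<in> Q"
  using square_mult_mem[OF one_mem, of 0] by simp

lemma formally_real: "formally_real_field TYPE('a)"
  using euclidean by (rule euclidean_field_formally_real)

lemma mem_iff_has_leading:
  assumes "y \<noteq> 0"
  shows "y \<in> Q \<longleftrightarrow> has_leading Q (subdegree y) (y $ subdegree y)"
proof
  assume "has_leading Q (subdegree y) (y $ subdegree y)"
  then obtain x where x: "x \<in> Q" "x \<noteq> 0" "subdegree x = subdegree y" "x $ subdegree x = y $ subdegree y"
    unfolding has_leading_def by auto
  obtain s where "y = s\<^sup>2 * x"
    using fps_eq_square_mult[of x y 1 0] formally_real_field_two_neq_zero[OF formally_real] x assms
    by auto
  then show "y \<in> Q" using square_mult_mem[OF x(1)] by simp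
qed (use assms in \<open>auto simp: has_leading_def\<close>)

lemma has_leading_nonzero: "has_leading Q d a \<Longrightarrow> a \<noteq> 0"
  by (auto simp: has_leading_def)

lemma has_leading_scale:
  assumes "has_leading Q d a" and "c \<noteq> 0"
  shows "has_leading Q (d + 2 * k) (a * (c * c))"
proof -
  obtain x where x: "x \<in> Q" "x \<noteq> 0" "subdegree x = d" "x $ d = a"
    using assms(1) by (auto simp: has_leading_def)
  define f where "f = fps_const c * fps_X ^ k"
  have f: "f \<noteq> 0" "subdegree f = k" "f $ k = c"
    using assms(2) by (simp_all add: f_def const_mult_X_power_neq_zero subdegree_const_mult_X_power)
  have "f\<^sup>2 * x \<in> Q" using square_mult_mem[OF x(1)] .
  moreover have "f\<^sup>2 * x \<noteq> 0" "subdegree (f\<^sup>2 * x) = d + 2 * k"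
    using f x by simp_all
  moreover have "(f * f) $ (k + k) = c * c"
    using nth_subdegree_mult[of f f] f by simp
  then have "(f\<^sup>2 * x) $ (d + 2 * k) = a * (c * c)"
    using nth_subdegree_mult[of "f * f" x] f x by (simp add: power2_eq_square mult_2 add.commute)
  ultimately show ?thesis unfolding has_leading_def by blast
qed

lemma has_leading_rescale: "has_leading Q d a \<Longrightarrow> c \<noteq> 0 \<Longrightarrow> has_leading Q d (a * (c * c))"
  using has_leading_scale[of d a c 0] by simp

lemma has_leading_one: "has_leading Q 0 1"
  using one_mem by (auto simp: has_leading_def intro!: bexI[of _ 1])

lemma full_degree_if_opposite:
  assumes a: "has_leading Q d a" and a': "has_leading Q d (- a)"
  shows "full_degree Q d"
  unfolding full_degree_def
proof (intro allI impI)
  fix b :: 'a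
  assume "b \<noteq> 0"
  have "a \<noteq> 0" using has_leading_nonzero[OF a] .
  obtain t where t: "b / a = t * t \<or> b / a = - (t * t)"
    using euclidean_field_square_cases[OF euclidean] by blast
  with \<open>b \<noteq> 0\<close> \<open>a \<noteq> 0\<close> have "t \<noteq> 0" by auto
  from t show "has_leading Q d b"
  proof
    assume "b / a = t * t"
    then have "b = a * (t * t)" using \<open>a \<noteq> 0\<close> by (simp add: field_simps)
    then show ?thesis using has_leading_rescale[OF a \<open>t \<noteq> 0\<close>] by simp
  next
    assume "b / a = - (t * t)"
    then have "b = - a * (t * t)" using \<open>a \<noteq> 0\<close> by (simp add: field_simps)
    then show ?thesis using has_leading_rescale[OF a' \<open>t \<noteq> 0\<close>] by simp
  qed
qed

lemma full_degree_Suc: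
  assumes "full_degree Q d"
  shows "full_degree Q (Suc d)"
  unfolding full_degree_def
proof (intro allI impI)
  fix b :: 'a
  assume "b \<noteq> 0"
  define y where "y = - (fps_X ^ d) + fps_const b * fps_X ^ Suc d"
  have "y $ d = -1" by (auto simp: y_def)
  moreover have "subdegree y = d"
    by (rule subdegreeI) (simp_all add: y_def)
  moreover from \<open>y $ d = -1\<close> have "y \<noteq> 0" by auto
  ultimately have "y \<in> Q"
    using assms mem_iff_has_leading[of y] by (auto simp: full_degree_def)
  moreover have "fps_X ^ d \<in> Q"
    using assms mem_iff_has_leading[of "fps_X ^ d"] by (simp add: full_degree_def fps_X_power_subdegree)
  ultimately have "fps_X ^ d + y \<in> Q" by (rule add_mem[rotated])
  moreover have "fps_X ^ d + y = fps_const b * fps_X ^ Suc d" by (simp add: y_def)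
  ultimately show "has_leading Q (Suc d) b"
    using mem_iff_has_leading[of "fps_const b * fps_X ^ Suc d"] \<open>b \<noteq> 0\<close>
    by (simp add: const_mult_X_power_neq_zero subdegree_const_mult_X_power)
qed

lemma full_degree_mono:
  assumes "full_degree Q d" and "d \<le> e"
  shows "full_degree Q e"
  using assms(2,1) by (induction e rule: dec_induct) (auto intro: full_degree_Suc)

lemma has_leading_sign:
  assumes "has_leading Q d a"
  obtains eps where "eps \<in> {1, -1}" and "has_leading Q d eps"
proof -
  obtain t where t: "a = t * t \<or> a = - (t * t)"
    using euclidean_field_square_cases[OF euclidean] by blast
  with has_leading_nonzero[OF assms] have "1 / t \<noteq> 0" by auto
  from has_leading_rescale[OF assms this] have "has_leading Q d (a * ((1 / t) * (1 / t)))" .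
  moreover have "a * ((1 / t) * (1 / t)) \<in> {1, -1}"
    using t \<open>1 / t \<noteq> 0\<close> by (elim disjE) (simp_all add: field_simps)
  ultimately show ?thesis using that by blast
qed

lemma has_leading_iff_sq_set:
  assumes eps: "has_leading Q m eps" and "m \<le> d" and "even (d - m)"
    and not_full: "\<not> full_degree Q d" and "b \<noteq> 0"
  shows "has_leading Q d b \<longleftrightarrow> b \<in> sq_set eps"
proof -
  have "eps \<noteq> 0" using has_leading_nonzero[OF eps] .
  have "d = m + 2 * ((d - m) div 2)" using assms(2,3) by simp
  then have d: "has_leading Q d (eps * (c * c))" if "c \<noteq> 0" for c
    using has_leading_scale[OF eps that, of "(d - m) div 2"] by simp
  show ?thesis
  proof
    assume b: "has_leading Q d b"
    obtain t where t: "b / eps = t * t \<or> b / eps = - (t * t)"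
      using euclidean_field_square_cases[OF euclidean] by blast
    with \<open>b \<noteq> 0\<close> \<open>eps \<noteq> 0\<close> have "t \<noteq> 0" and "1 / t \<noteq> 0" by auto
    have "b / eps \<noteq> - (t * t)"
    proof
      assume "b / eps = - (t * t)"
      then have "b * ((1 / t) * (1 / t)) = - eps"
        using \<open>t \<noteq> 0\<close> \<open>eps \<noteq> 0\<close> by (simp add: field_simps)
      then have "has_leading Q d (- eps)"
        using has_leading_rescale[OF b \<open>1 / t \<noteq> 0\<close>] by simp
      with d[of 1] have "full_degree Q d"
        using full_degree_if_opposite by simp
      with not_full show False ..
    qed
    with t have "b = eps * (t * t)" using \<open>eps \<noteq> 0\<close> by (simp add: field_simps)
    then show "b \<in> sq_set eps" by (auto simp: sq_set_iff)
  next
    assume "b \<in> sq_set eps"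
    then obtain c where "b = eps * (c * c)" by (auto simp: sq_set_iff)
    with \<open>b \<noteq> 0\<close> d show "has_leading Q d b" by auto
  qed
qed

lemma full_degree_threshold:
  obtains N where "\<And>d. full_degree Q d \<longleftrightarrow> (\<exists>n. N = Some n \<and> n \<le> d)"
proof (cases "\<exists>d. full_degree Q d")
  case True
  define n where "n = (LEAST d. full_degree Q d)"
  have "full_degree Q d \<longleftrightarrow> n \<le> d" for d
  proof
    show "full_degree Q d \<Longrightarrow> n \<le> d" unfolding n_def by (rule Least_le)
    show "n \<le> d \<Longrightarrow> full_degree Q d"
      unfolding n_def by (rule full_degree_mono[OF LeastI_ex[OF True]])
  qed
  then show ?thesis using that[of "Some n"] by simp
next
  case False
  then show ?thesis using that[of None] by simp
qed

lemma odd_partial_degree_param: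
  assumes N: "\<And>d. full_degree Q d \<longleftrightarrow> (\<exists>n. N = Some n \<and> n \<le> d)"
  obtains M where "qm_params N M"
    and "\<And>d. odd_partial_degree Q d \<Longrightarrow> \<exists>eps m. M = Some (eps, m) \<and> m \<le> d"
    and "\<And>eps m. M = Some (eps, m) \<Longrightarrow> has_leading Q m eps"
proof (cases "\<exists>d. odd_partial_degree Q d")
  case True
  define m where "m = (LEAST d. odd_partial_degree Q d)"
  have "odd_partial_degree Q m" unfolding m_def by (rule LeastI_ex[OF True])
  then obtain a where "has_leading Q m a" "odd m" "\<not> full_degree Q m"
    by (auto simp: odd_partial_degree_def)
  obtain eps where "eps \<in> {1, -1}" "has_leading Q m eps"
    using has_leading_sign[OF \<open>has_leading Q m a\<close>] by blast
  moreover have "m < n" if "N = Some n" for n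
    using N[of m] \<open>\<not> full_degree Q m\<close> that by auto
  moreover have "m \<le> d" if "odd_partial_degree Q d" for d
    unfolding m_def using that by (rule Least_le)
  ultimately show ?thesis
    using that[of "Some (eps, m)"] \<open>odd m\<close> by (auto simp: qm_params_def)
next
  case False
  then show ?thesis using that[of None] by (simp add: qm_params_def)
qed

lemma has_leading_iff_qm_family_leading:
  assumes N: "\<And>d. full_degree Q d \<longleftrightarrow> (\<exists>n. N = Some n \<and> n \<le> d)"
    and params: "qm_params N M"
    and least: "\<And>d. odd_partial_degree Q d \<Longrightarrow> \<exists>eps m. M = Some (eps, m) \<and> m \<le> d"
    and lead: "\<And>eps m. M = Some (eps, m) \<Longrightarrow> has_leading Q m eps"
    and "b \<noteq> 0"
  shows "has_leading Q d b \<longleftrightarrow> qm_family_leading N M d b"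
proof (cases "full_degree Q d")
  case True
  then have "has_leading Q d b" using \<open>b \<noteq> 0\<close> by (simp add: full_degree_def)
  moreover have "qm_family_leading N M d b"
    using True N[of d] by (auto simp: qm_family_leading_def)
  ultimately show ?thesis by simp
next
  case not_full: False
  then have no_N: "\<not> (\<exists>n. N = Some n \<and> n \<le> d)" using N by simp
  show ?thesis
  proof (cases "even d")
    case True
    then show ?thesis
      using has_leading_iff_sq_set[OF has_leading_one _ _ not_full \<open>b \<noteq> 0\<close>] no_N
      by (auto simp: qm_family_leading_def)
  next
    case False
    have iff: "has_leading Q d b \<longleftrightarrow> b \<in> sq_set eps" if "M = Some (eps, m)" "m \<le> d" for eps m
    proof -
      have "odd m" using params that(1) by (simp add: qm_params_def)
      with False \<open>m \<le> d\<close> have "even (d - m)" by simp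
      with has_leading_iff_sq_set[OF lead[OF that(1)] \<open>m \<le> d\<close> _ not_full \<open>b \<noteq> 0\<close>]
      show ?thesis .
    qed
    show ?thesis
    proof
      assume "has_leading Q d b"
      then have "odd_partial_degree Q d" using False not_full by (auto simp: odd_partial_degree_def)
      then obtain eps m where "M = Some (eps, m)" "m \<le> d" using least by blast
      then show "qm_family_leading N M d b"
        using iff \<open>has_leading Q d b\<close> False by (auto simp: qm_family_leading_def)
    next
      assume "qm_family_leading N M d b"
      then obtain eps m where "M = Some (eps, m)" "m \<le> d" "b \<in> sq_set eps"
        using False no_N by (auto simp: qm_family_leading_def)
      then show "has_leading Q d b" using iff by blast
    qed
  qed
qed

theorem eq_qm_family:
  obtains N M where "qm_params N M" and "Q = qm_family N M"
proof -
  obtain N where N: "\<And>d. full_degree Q d \<longleftrightarrow> (\<exists>n. N = Some n \<and> n \<le> d)"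
    using full_degree_threshold by blast
  obtain M where params: "qm_params N M"
    and least: "\<And>d. odd_partial_degree Q d \<Longrightarrow> \<exists>eps m. M = Some (eps, m) \<and> m \<le> d"
    and lead: "\<And>eps m. M = Some (eps, m) \<Longrightarrow> has_leading Q m eps"
    using odd_partial_degree_param[OF N] by blast
  have "y \<in> Q \<longleftrightarrow> y \<in> qm_family N M" for y
    using has_leading_iff_qm_family_leading[OF N params least lead]
    by (cases "y = 0")
      (simp_all add: zero_mem zero_in_qm_family mem_iff_has_leading qm_family_mem_iff[OF params])
  then have "Q = qm_family N M" by blast
  with params show ?thesis by (rule that)
qed

end

theorem mainTheorem16:
  fixes Q :: "'a::field fps set"
  assumes "euclidean_field TYPE('a)"
    and "quadratic_module Q"
  shows "length (filter id
           [ Q = Phi (sq_set 1) 0,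
             Q = UNIV,
             (\<exists>n eps. odd n \<and> eps \<in> {1, -1} \<and>
                Q = Phi (sq_set 1) 0 \<union> Phi (sq_set eps) n),
             (\<exists>n. n > 0 \<and>
                Q = Phi (sq_set 1) 0 \<union> Phi UNIV n \<union> Phi UNIV (n + 1)),
             (\<exists>eps m n. eps \<in> {1, -1} \<and> odd m \<and> n > 0 \<and> m < n \<and>
                Q = Phi (sq_set 1) 0 \<union> Phi (sq_set eps) m \<union> Phi UNIV n \<union> Phi UNIV (n + 1))
           ]) = 1
         \<and> preordering Q"
proof -
  interpret euclidean_quadratic_module Q
    using assms by unfold_locales
  obtain N M where params: "qm_params N M" and Q: "Q = qm_family N M"
    by (rule eq_qm_family)
  have "x * y \<in> Q" if "x \<in> Q" and "y \<in> Q" for x y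
    using qm_family_mult_closed[OF params, of x y] that Q by simp
  then have "preordering Q"
    using quadratic_module by (simp add: preordering_def)
  with qm_family_forms_count[OF formally_real params Q] show ?thesis ..
qed

end
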